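(* If $\Theta\vdash S$ is a minimal type for $\mathsf{F_{<:}^\top}$ and $\Theta\vdash^\top T$ is an $\mathsf{F_{<:}^\top}$ type (over an $\mathsf{F_{<:}^\top}$ context $\Theta$), then the subtyping algorithm terminates on the input $\Theta\vdash_A S<:T$.
   Context: System $\mathsf{F_{<:}^{K\top}}$: raw types $T ::= \top \mid X \mid T\to T \mid \forall^{\mathsf K}(X<:T).T \mid \forall^\top(X<:T).T$, up to $\alpha$-conversion. Contexts $\Theta$: finite sequences of $X<:T$ or $x:T$ with distinct variables, each type well-formed over the preceding part. Algorithmic subtyping $\Theta\vdash_A S<:T$ is generated by: (1) $\Theta\vdash_A T<:\top$; (2) $\Theta\vdash_A X<:X$; (3) if $T\not\equiv\top$, $T\not\equiv X$ and $\Theta,X<:S,\Theta'\vdash_A S<:T$, then $\Theta,X<:S,\Theta'\vdash_A X<:T$; (4) from $\Theta\vdash_A S'<:S$ and $\Theta\vdash_A T<:T'$ infer $\Theta\vdash_A S\to T<:S'\to T'$; (5) from $\Theta,X<:S\vdash_A T<:T'$ infer $\Theta\vdash_A\forall^{\mathsf K}(X<:S).T<:\forall^{\mathsf K}(X<:S).T'$; (6) from $\Theta\vdash_A T_0<:S_0$ and $\Theta,X<:S_0\vdash_A S_1<:T_1$ infer $\Theta\vdash_A\forall^{\mathsf K}(X<:S_0).S_1<:\forall^\top(X<:T_0).T_1$; (7) from $\Theta\vdash_A T_0<:S_0$ and $\Theta,X<:\top\vdash_A S_1<:T_1$ infer $\Theta\vdash_A\forall^\top(X<:S_0).S_1<:\forall^\top(X<:T_0).T_1$.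 Each judgement is the conclusion of at most one rule instance; the subtyping algorithm is the resulting deterministic goal-directed search: given $\Theta\vdash_A S<:T$, determine the unique applicable rule (rejecting if none), and recursively check its premises in order, accepting iff all are accepted. An $\mathsf{F_{<:}^\top}$ type/context is one containing only $\forall^\top$ quantifiers. The minimal types for $\mathsf{F_{<:}^\top}$ are the types generated by $T ::= S \mid \forall^{\mathsf K}(X<:S).T \mid S\to T$, where $S$ ranges over $\mathsf{F_{<:}^\top}$ types. *)

theory Defs
  imports Main
begin

text \<open>Raw types of System F-sub^{K,Top} in locally nameless / de Bruijn form
  (alpha-equivalence classes are represented by de Bruijn terms).
  TVar i refers to the i-th enclosing type-variable binder (0 = innermost);
  AllK S T and AllT S T bind index 0 in T (not in S).\<close>

datatype ty = Top | TVar nat | Arr ty ty | AllK ty ty | AllT ty ty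

text \<open>Context bindings: X <: T (type variable) or x : T (term variable).
  Contexts are lists with the most recent binding at the head.
  Only type-variable bindings are counted by de Bruijn indices of types.\<close>

datatype binding = TB ty | VB ty

type_synonym ctx = "binding list"

fun shift :: "nat \<Rightarrow> ty \<Rightarrow> ty" where
  "shift k Top = Top"
| "shift k (TVar i) = (if i < k then TVar i else TVar (Suc i))"
| "shift k (Arr S T) = Arr (shift k S) (shift k T)"
| "shift k (AllK S T) = AllK (shift k S) (shift (Suc k) T)"
| "shift k (AllT S T) = AllT (shift k S) (shift (Suc k) T)"

fun ntv :: "ctx \<Rightarrow> nat" where
  "ntv [] = 0"
| "ntv (TB _ # G) = Suc (ntv G)"
| "ntv (VB _ # G) = ntv G"

text \<open>Bound of type variable i in the context, expressed over the whole context.\<close>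
fun lookup :: "ctx \<Rightarrow> nat \<Rightarrow> ty option" where
  "lookup [] i = None"
| "lookup (VB _ # G) i = lookup G i"
| "lookup (TB T # G) 0 = Some (shift 0 T)"
| "lookup (TB T # G) (Suc i) = map_option (shift 0) (lookup G i)"

fun wf_ty :: "nat \<Rightarrow> ty \<Rightarrow> bool" where
  "wf_ty n Top = True"
| "wf_ty n (TVar i) = (i < n)"
| "wf_ty n (Arr S T) = (wf_ty n S \<and> wf_ty n T)"
| "wf_ty n (AllK S T) = (wf_ty n S \<and> wf_ty (Suc n) T)"
| "wf_ty n (AllT S T) = (wf_ty n S \<and> wf_ty (Suc n) T)"

fun wf_ctx :: "ctx \<Rightarrow> bool" where
  "wf_ctx [] = True"
| "wf_ctx (TB T # G) = (wf_ctx G \<and> wf_ty (ntv G) T)"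
| "wf_ctx (VB T # G) = (wf_ctx G \<and> wf_ty (ntv G) T)"

text \<open>F-sub^Top types: only Top-quantifiers.\<close>
fun top_ty :: "ty \<Rightarrow> bool" where
  "top_ty Top = True"
| "top_ty (TVar i) = True"
| "top_ty (Arr S T) = (top_ty S \<and> top_ty T)"
| "top_ty (AllK S T) = False"
| "top_ty (AllT S T) = (top_ty S \<and> top_ty T)"

fun top_binding :: "binding \<Rightarrow> bool" where
  "top_binding (TB T) = top_ty T"
| "top_binding (VB T) = top_ty T"

definition top_ctx :: "ctx \<Rightarrow> bool" where
  "top_ctx G = (\<forall>b\<in>set G. top_binding b)"

inductive minimal_ty :: "ty \<Rightarrow> bool" where
  "top_ty S \<Longrightarrow> minimal_ty S"
| "top_ty S \<Longrightarrow> minimal_ty T \<Longrightarrow> minimal_ty (AllK S T)"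
| "top_ty S \<Longrightarrow> minimal_ty T \<Longrightarrow> minimal_ty (Arr S T)"

text \<open>The unique applicable rule of algorithmic subtyping for goal G |-A S <: T:
  None = no rule applies (reject); Some ps = the premises of the unique rule,
  in the order they are checked.\<close>
fun alg_rule :: "ctx \<Rightarrow> ty \<Rightarrow> ty \<Rightarrow> (ctx \<times> ty \<times> ty) list option" where
  "alg_rule G S Top = Some []"
| "alg_rule G (TVar i) (TVar j) =
     (if i = j then Some []
      else (case lookup G i of None \<Rightarrow> None | Some U \<Rightarrow> Some [(G, U, TVar j)]))"
| "alg_rule G (TVar i) T =
     (case lookup G i of None \<Rightarrow> None | Some U \<Rightarrow> Some [(G, U, T)])"
| "alg_rule G (Arr S T) (Arr S' T') = Some [(G, S', S), (G, T, T')]"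
| "alg_rule G (AllK S T) (AllK S' T') =
     (if S = S' then Some [(TB S # G, T, T')] else None)"
| "alg_rule G (AllK S0 S1) (AllT T0 T1) = Some [(G, T0, S0), (TB S0 # G, S1, T1)]"
| "alg_rule G (AllT S0 S1) (AllT T0 T1) = Some [(G, T0, S0), (TB Top # G, S1, T1)]"
| "alg_rule G S T = None"

inductive sub_alg :: "ctx \<Rightarrow> ty \<Rightarrow> ty \<Rightarrow> bool" where
  SA_Top: "sub_alg G T Top"
| SA_Refl: "sub_alg G (TVar i) (TVar i)"
| SA_Trans: "T \<noteq> Top \<Longrightarrow> T \<noteq> TVar i \<Longrightarrow> lookup G i = Some U \<Longrightarrow> sub_alg G U T
              \<Longrightarrow> sub_alg G (TVar i) T"
| SA_Arrow: "sub_alg G S' S \<Longrightarrow> sub_alg G T T' \<Longrightarrow> sub_alg G (Arr S T) (Arr S' T')"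
| SA_AllK: "sub_alg (TB S # G) T T' \<Longrightarrow> sub_alg G (AllK S T) (AllK S T')"
| SA_AllKT: "sub_alg G T0 S0 \<Longrightarrow> sub_alg (TB S0 # G) S1 T1
              \<Longrightarrow> sub_alg G (AllK S0 S1) (AllT T0 T1)"
| SA_AllT: "sub_alg G T0 S0 \<Longrightarrow> sub_alg (TB Top # G) S1 T1
              \<Longrightarrow> sub_alg G (AllT S0 S1) (AllT T0 T1)"

text \<open>Big-step semantics of the deterministic goal-directed search: run G S T b means
  the algorithm on input G |-A S <: T terminates with answer b.\<close>
inductive run :: "ctx \<Rightarrow> ty \<Rightarrow> ty \<Rightarrow> bool \<Rightarrow> bool"
  and run_seq :: "(ctx \<times> ty \<times> ty) list \<Rightarrow> bool \<Rightarrow> bool" where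
  run_none: "alg_rule G S T = None \<Longrightarrow> run G S T False"
| run_some: "alg_rule G S T = Some ps \<Longrightarrow> run_seq ps b \<Longrightarrow> run G S T b"
| seq_nil: "run_seq [] True"
| seq_fail: "run G S T False \<Longrightarrow> run_seq ((G, S, T) # ps) False"
| seq_ok: "run G S T True \<Longrightarrow> run_seq ps b \<Longrightarrow> run_seq ((G, S, T) # ps) b"

definition terminates :: "ctx \<Rightarrow> ty \<Rightarrow> ty \<Rightarrow> bool" where
  "terminates G S T = (\<exists>b. run G S T b)"

end

theory Submission
  imports Defs
begin

text \<open>Each rule of the algorithm either strictly decreases the number of AllK binders
  of the left-hand type, or keeps it and strictly decreases a size in which a type variable
  weighs one more than its bound.  The only rule that can increase that size is rule (6),
  where the bound of the body changes from Top to S0; but it consumes an AllK binder.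
  Throughout the search the left-hand side stays minimal and the right-hand side and the
  context stay Top-only, because every type that changes sides is a Top-only type.\<close>

fun num_AllK :: "ty \<Rightarrow> nat" where
  "num_AllK Top = 0"
| "num_AllK (TVar i) = 0"
| "num_AllK (Arr S T) = num_AllK S + num_AllK T"
| "num_AllK (AllK S T) = Suc (num_AllK S + num_AllK T)"
| "num_AllK (AllT S T) = num_AllK S + num_AllK T"

text \<open>The variable bound by AllT gets the weight of Top rather than of its bound,
  matching the context extension X <: Top of rule (7).\<close>

fun weight :: "nat list \<Rightarrow> ty \<Rightarrow> nat" where
  "weight E Top = 1"
| "weight E (TVar i) = Suc (if i < length E then E ! i else 0)"
| "weight E (Arr S T) = Suc (weight E S + weight E T)"
| "weight E (AllK S T) = Suc (weight E S + weight (weight E S # E) T)"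
| "weight E (AllT S T) = Suc (weight E S + weight (weight E Top # E) T)"

fun bound_weights :: "ctx \<Rightarrow> nat list" where
  "bound_weights [] = []"
| "bound_weights (VB _ # G) = bound_weights G"
| "bound_weights (TB T # G) = weight (bound_weights G) T # bound_weights G"

lemma weight_pos: "0 < weight E T"
  by (cases T) auto

lemma weight_shift:
  "k \<le> length E \<Longrightarrow> weight (take k E @ a # drop k E) (shift k T) = weight E T"
proof (induction T arbitrary: k E)
  case (TVar i)
  then show ?case by (auto simp: nth_append min_def)
next
  case (AllK S T)
  then show ?case using AllK.IH(2)[of "Suc k" "weight E S # E"] by simp
next
  case (AllT S T)
  then show ?case using AllT.IH(2)[of "Suc k" "weight E Top # E"] by simp
qed auto

lemma weight_shift0: "weight (a # E) (shift 0 T) = weight E T"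
  using weight_shift[of 0 E a T] by simp

lemma bound_weights_lookup:
  "lookup G i = Some U \<Longrightarrow> i < length (bound_weights G) \<and> bound_weights G ! i = weight (bound_weights G) U"
  by (induction G i arbitrary: U rule: lookup.induct) (auto simp: weight_shift0)

lemma top_ty_shift: "top_ty T \<Longrightarrow> top_ty (shift k T)"
  by (induction k T rule: shift.induct) auto

lemma top_ty_lookup: "top_ctx G \<Longrightarrow> lookup G i = Some U \<Longrightarrow> top_ty U"
  by (induction G i arbitrary: U rule: lookup.induct) (auto simp: top_ctx_def top_ty_shift)

lemma num_AllK_top_ty: "top_ty T \<Longrightarrow> num_AllK T = 0"
  by (induction T) auto

inductive_cases minimal_ty_ArrE: "minimal_ty (Arr S T)"
inductive_cases minimal_ty_AllKE: "minimal_ty (AllK S T)"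
inductive_cases minimal_ty_AllTE: "minimal_ty (AllT S T)"

definition minimal_goal :: "ctx \<times> ty \<times> ty \<Rightarrow> bool" where
  "minimal_goal = (\<lambda>(G, S, T). top_ctx G \<and> minimal_ty S \<and> top_ty T)"

definition goal_order :: "((ctx \<times> ty \<times> ty) \<times> (ctx \<times> ty \<times> ty)) set" where
  "goal_order = measures [\<lambda>(G, S, T). num_AllK S,
     \<lambda>(G, S, T). weight (bound_weights G) S + weight (bound_weights G) T]"

lemma wf_goal_order: "wf goal_order"
  by (simp add: goal_order_def)

lemma terminates_if_premises_terminate:
  assumes "\<And>ps G' S' T'. alg_rule G S T = Some ps \<Longrightarrow> (G', S', T') \<in> set ps \<Longrightarrow> terminates G' S' T'"
  shows "terminates G S T"
proof (cases "alg_rule G S T")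
  case None
  then show ?thesis unfolding terminates_def using run_none by blast
next
  case (Some ps)
  have "\<exists>b. run_seq qs b" if "set qs \<subseteq> set ps" for qs
    using that
  proof (induction qs)
    case Nil
    then show ?case using seq_nil by blast
  next
    case (Cons q qs)
    obtain G' S' T' where q: "q = (G', S', T')" by (cases q)
    with Cons.prems have "(G', S', T') \<in> set ps" by simp
    then obtain b where b: "run G' S' T' b"
      using assms[OF Some] unfolding terminates_def by blast
    show ?case
    proof (cases b)
      case True
      with b q Cons show ?thesis using seq_ok by fastforce
    next
      case False
      with b q show ?thesis using seq_fail by fastforce
    qed
  qed
  then show ?thesis unfolding terminates_def using run_some[OF Some] by blast
qed

lemma terminates_wf:
  assumes "wf R"
    and "\<And>G S T ps g. P (G, S, T) \<Longrightarrow> alg_rule G S T = Some ps \<Longrightarrow> g \<in> set ps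
           \<Longrightarrow> P g \<and> (g, (G, S, T)) \<in> R"
    and "P (G, S, T)"
  shows "terminates G S T"
  using assms(1,3)
proof (induction "(G, S, T)" arbitrary: G S T rule: wf_induct_rule)
  case less
  show ?case
    by (rule terminates_if_premises_terminate) (use less assms(2) in blast)
qed

lemma alg_rule_premise_decreases:
  assumes "alg_rule G S T = Some ps" and "g \<in> set ps" and "minimal_goal (G, S, T)"
  shows "minimal_goal g \<and> (g, (G, S, T)) \<in> goal_order"
  using assms
proof (induction G S T rule: alg_rule.induct)
  case (4 G S T S' T')
  then show ?case using weight_pos[of "bound_weights G"]
    by (auto simp: minimal_goal_def goal_order_def num_AllK_top_ty
        intro: minimal_ty.intros elim!: minimal_ty_ArrE)
next
  case (6 G S0 S1 T0 T1)
  then show ?case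
    by (auto simp: minimal_goal_def goal_order_def num_AllK_top_ty top_ctx_def
        intro: minimal_ty.intros elim!: minimal_ty_AllKE)
next
  case (7 G S0 S1 T0 T1)
  then show ?case using weight_pos[of "bound_weights G"]
    by (auto simp: minimal_goal_def goal_order_def num_AllK_top_ty top_ctx_def
        intro: minimal_ty.intros elim!: minimal_ty_AllTE)
qed (auto simp: minimal_goal_def goal_order_def num_AllK_top_ty split: if_splits option.splits
      intro: minimal_ty.intros dest: top_ty_lookup bound_weights_lookup)

theorem proposition8p3:
  assumes "wf_ctx G" and "top_ctx G"
    and "wf_ty (ntv G) S" and "minimal_ty S"
    and "wf_ty (ntv G) T" and "top_ty T"
  shows "terminates G S T"
  using wf_goal_order alg_rule_premise_decreases
proof (rule terminates_wf)
  show "minimal_goal (G, S, T)"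
    using assms unfolding minimal_goal_def by simp
qed

end
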